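(* Let $\frac12<p<1$ and let $f:\mathbb{Z}^+\to[0,\infty)$ be monotonically increasing (non-decreasing). Let $\{N_j\}_{j\ge0}$ be the discrete-time, time-inhomogeneous Markov chain on $\mathbb{N}$ with $N_0=1$, $N_1\sim\mathrm{Bern}\big(\frac{1-p}{p}\big)$, and, for $j\ge1$, conditionally on $N_j$, $N_{j+1}\sim\mathrm{Bin}\big(N_j,\frac{1-p}{p}\big)+\mathrm{Poiss}\big(\frac{1-p}{p}f(j)\big)$ with independent summands. Let $\mathbf{E}^*$ denote expectation for this chain and $K=\#\{j\in\mathbb{Z}^+:N_j=0\}$. If $$\sum_{j=1}^{\infty}e^{-\frac{1-p}{2p-1}f(j)}=\infty,$$ then $\mathbf{E}^*[K]=\infty$. *)

theory Defs
  imports "HOL-Probability.Probability"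
begin

text \<open>Poisson distribution with rate r \<ge> 0 (rate 0 is the point mass at 0;
  the library's poisson_pmf is only specified for positive rates).\<close>
definition poiss :: "real \<Rightarrow> nat pmf" where
  "poiss r = (if 0 < r then poisson_pmf r else return_pmf 0)"

text \<open>One transition of the chain from time j to time j+1, given N_j = n, with
  q = (1-p)/p.  For j = 0 (N_0 = 1) this is Bin(1,q) = Bern(q); for j \<ge> 1 it is
  Bin(n,q) + Poiss(q f(j)) with independent summands.\<close>
definition chain_step :: "real \<Rightarrow> (nat \<Rightarrow> real) \<Rightarrow> nat \<Rightarrow> nat \<Rightarrow> nat pmf" where
  "chain_step p f j n =
     (let q = (1 - p) / p in
      if j = 0 then binomial_pmf n q
      else bind_pmf (binomial_pmf n q) (\<lambda>b. map_pmf (\<lambda>c. b + c) (poiss (q * f j))))"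

primrec chain_path :: "real \<Rightarrow> (nat \<Rightarrow> real) \<Rightarrow> nat \<Rightarrow> nat list pmf" where
  "chain_path p f 0 = return_pmf [1]"
| "chain_path p f (Suc j) =
     bind_pmf (chain_path p f j) (\<lambda>xs. map_pmf (\<lambda>y. xs @ [y]) (chain_step p f j (last xs)))"

definition zero_count :: "nat \<Rightarrow> nat list \<Rightarrow> nat" where
  "zero_count n xs = card {j \<in> {1..n}. xs ! j = 0}"

text \<open>E*[K] for K = #{j \<ge> 1. N_j = 0}, via monotone convergence: the supremum
  over n of E*[#{1 \<le> j \<le> n. N_j = 0}].\<close>
definition expected_zeros :: "real \<Rightarrow> (nat \<Rightarrow> real) \<Rightarrow> ennreal" where
  "expected_zeros p f =
     (SUP n. \<integral>\<^sup>+ xs. ennreal (real (zero_count n xs)) \<partial>measure_pmf (chain_path p f n))"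

end

theory Submission imports Defs begin

(* Write q = (1-p)/p.  Binomial thinning with retention probability q turns a generating
   function G(s) into G(1 - q (1 - s)), and the independent Poisson immigration multiplies it by
   exp (-q f(j) (1 - s)).  Unrolling from N_0 = 1 and setting s = 0 gives
     P(N_j = 0) = (1 - q^j) exp (-m_j),   m_j = sum_{1 <= i < j} f(i) q^(j-i),
   where m_j is the expected number of immigrants still present at time j.  Since f is
   non-decreasing, m_(j+1) <= q/(1-q) f(j) = (1-p)/(2p-1) f(j), hence
   P(N_(j+1) = 0) >= (1-q) exp (-(1-p)/(2p-1) f(j)), and E[K] = sum_j P(N_j = 0) diverges
   by comparison. *)

lemma nn_integral_binomial_pmf_power:
  assumes "0 \<le> q" "q \<le> 1" "0 \<le> s"
  shows "(\<integral>\<^sup>+k. ennreal (s ^ k) \<partial>binomial_pmf n q) = ennreal ((1 - q * (1 - s)) ^ n)"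
proof -
  have "(\<integral>\<^sup>+k. ennreal (s ^ k) \<partial>binomial_pmf n q)
      = ennreal (\<Sum>k\<le>n. s ^ k * pmf (binomial_pmf n q) k)"
    using assms
    by (subst nn_integral_measure_pmf_support[of "{..n}"])
      (auto simp: set_pmf_binomial_eq sum_ennreal[symmetric] ennreal_mult split: if_splits simp del: pmf_binomial)
  also have "(\<Sum>k\<le>n. s ^ k * pmf (binomial_pmf n q) k)
      = (\<Sum>k\<le>n. of_nat (n choose k) * (q * s) ^ k * (1 - q) ^ (n - k))"
    using assms by (intro sum.cong) (auto simp: power_mult_distrib)
  also have "\<dots> = (q * s + (1 - q)) ^ n"
    by (rule binomial_ring[symmetric])
  finally show ?thesis
    by (simp add: algebra_simps)
qed

lemma nn_integral_poiss_power:
  assumes "0 \<le> r" "0 \<le> s"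
  shows "(\<integral>\<^sup>+k. ennreal (s ^ k) \<partial>poiss r) = ennreal (exp (- r * (1 - s)))"
proof (cases "r = 0")
  case False
  with assms have r: "0 < r" by simp
  have sums: "(\<lambda>k. (r * s) ^ k /\<^sub>R fact k * exp (-r)) sums (exp (r * s) * exp (-r))"
    by (intro sums_mult2 exp_converges)
  have pmf_eq: "(\<lambda>k. (r * s) ^ k /\<^sub>R fact k * exp (-r)) = (\<lambda>k. pmf (poisson_pmf r) k * s ^ k)"
    using r by (auto simp: power_mult_distrib divide_simps)
  have "(\<integral>\<^sup>+k. ennreal (s ^ k) \<partial>poiss r) = (\<Sum>k. ennreal (pmf (poisson_pmf r) k * s ^ k))"
    using r \<open>0 \<le> s\<close> by (simp add: poiss_def nn_integral_measure_pmf nn_integral_count_space_nat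
        ennreal_mult[symmetric] mult_ac)
  also have "\<dots> = ennreal (exp (r * s) * exp (-r))"
    using sums assms unfolding pmf_eq by (intro sums_unique[symmetric]) (simp add: sums_ennreal)
  finally show ?thesis
    by (simp add: mult_exp_exp algebra_simps)
qed (simp add: poiss_def)

lemma nn_integral_power_bind_add_pmf:
  fixes A B :: "nat pmf"
  assumes "0 \<le> s"
  shows "(\<integral>\<^sup>+k. ennreal (s ^ k) \<partial>bind_pmf A (\<lambda>a. map_pmf (\<lambda>b. a + b) B))
    = (\<integral>\<^sup>+k. ennreal (s ^ k) \<partial>A) * (\<integral>\<^sup>+k. ennreal (s ^ k) \<partial>B)"
  using assms by (simp add: power_add ennreal_mult nn_integral_cmult nn_integral_multc)

definition chain_marginal :: "real \<Rightarrow> (nat \<Rightarrow> real) \<Rightarrow> nat \<Rightarrow> nat pmf" where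
  "chain_marginal p f j = map_pmf last (chain_path p f j)"

lemma chain_marginal_0 [simp]: "chain_marginal p f 0 = return_pmf 1"
  by (simp add: chain_marginal_def)

lemma chain_marginal_Suc: "chain_marginal p f (Suc j) = bind_pmf (chain_marginal p f j) (chain_step p f j)"
  by (simp add: chain_marginal_def map_bind_pmf bind_map_pmf map_pmf_comp)

lemma length_chain_path: "xs \<in> set_pmf (chain_path p f n) \<Longrightarrow> length xs = Suc n"
  by (induction n arbitrary: xs) auto

lemma map_pmf_nth_chain_path:
  "k \<le> n \<Longrightarrow> map_pmf (\<lambda>xs. xs ! k) (chain_path p f n) = chain_marginal p f k"
proof (induction n)
  case 0
  then show ?case by (simp add: chain_marginal_def)
next
  case (Suc n)
  show ?case
  proof (cases "k = Suc n")
    case True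
    have "map_pmf (\<lambda>xs. xs ! k) (chain_path p f (Suc n)) = map_pmf last (chain_path p f (Suc n))"
      using True by (intro map_pmf_cong) (auto simp: last_conv_nth nth_append dest: length_chain_path)
    with True show ?thesis by (simp add: chain_marginal_def)
  next
    case False
    with Suc.prems have "k \<le> n" by simp
    then have "map_pmf (\<lambda>xs. xs ! k) (chain_path p f (Suc n)) = map_pmf (\<lambda>xs. xs ! k) (chain_path p f n)"
      using length_chain_path[of _ p f n]
      by (simp add: map_bind_pmf map_pmf_comp nth_append bind_return_pmf' map_pmf_def[symmetric]
          cong: bind_pmf_cong)
    with Suc.IH \<open>k \<le> n\<close> show ?thesis by simp
  qed
qed

definition immigrant_mean :: "real \<Rightarrow> (nat \<Rightarrow> real) \<Rightarrow> nat \<Rightarrow> real" where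
  "immigrant_mean q f j = (\<Sum>i\<in>{1..<j}. f i * q ^ (j - i))"

lemma immigrant_mean_Suc:
  assumes "1 \<le> j"
  shows "immigrant_mean q f (Suc j) = q * (f j + immigrant_mean q f j)"
proof -
  have "{1..<Suc j} = insert j {1..<j}" using assms by auto
  then have "immigrant_mean q f (Suc j) = f j * q + (\<Sum>i\<in>{1..<j}. q * (f i * q ^ (j - i)))"
    unfolding immigrant_mean_def by (simp add: Suc_diff_le mult.left_commute)
  then show ?thesis
    by (simp add: immigrant_mean_def sum_distrib_left algebra_simps)
qed

lemma immigrant_mean_le:
  fixes q :: real
  assumes q: "0 \<le> q" "q < 1" and f: "\<And>j. 1 \<le> j \<Longrightarrow> 0 \<le> f j"
    and mono: "\<And>i j. 1 \<le> i \<Longrightarrow> i \<le> j \<Longrightarrow> f i \<le> f j" and "1 \<le> j"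
  shows "immigrant_mean q f (Suc j) \<le> q / (1 - q) * f j"
  using \<open>1 \<le> j\<close>
proof (induction j rule: nat_induct_at_least)
  case base
  have "immigrant_mean q f (Suc 1) = q * f 1"
    by (simp add: immigrant_mean_Suc immigrant_mean_def)
  also have "\<dots> \<le> q / (1 - q) * f 1"
    using q f[of 1] by (intro mult_right_mono) (simp_all add: field_simps)
  finally show ?case .
next
  case (Suc j)
  have "immigrant_mean q f (Suc (Suc j)) = q * (f (Suc j) + immigrant_mean q f (Suc j))"
    by (simp add: immigrant_mean_Suc)
  also have "\<dots> \<le> q * (f (Suc j) + q / (1 - q) * f (Suc j))"
    using Suc q mono[of j "Suc j"] by (intro mult_left_mono add_left_mono order.trans[OF Suc.IH]) auto
  also have "\<dots> = q / (1 - q) * f (Suc j)"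
    using q by (simp add: field_simps)
  finally show ?case .
qed

lemma nn_integral_chain_step_power:
  assumes q: "q = (1 - p) / p" "0 \<le> q" "q \<le> 1" and s: "0 \<le> s" and f: "1 \<le> j \<Longrightarrow> 0 \<le> f j"
  shows "(\<integral>\<^sup>+k. ennreal (s ^ k) \<partial>chain_step p f j n)
    = ennreal ((1 - q * (1 - s)) ^ n) * ennreal (if j = 0 then 1 else exp (- q * f j * (1 - s)))"
proof (cases "j = 0")
  case True
  then show ?thesis
    unfolding chain_step_def Let_def q(1)[symmetric]
    using nn_integral_binomial_pmf_power[OF q(2,3) s] by simp
next
  case False
  with q(2) f have "0 \<le> q * f j" by simp
  have "chain_step p f j n = bind_pmf (binomial_pmf n q) (\<lambda>b. map_pmf (\<lambda>c. b + c) (poiss (q * f j)))"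
    using False by (simp add: chain_step_def q(1))
  then have "(\<integral>\<^sup>+k. ennreal (s ^ k) \<partial>chain_step p f j n)
      = (\<integral>\<^sup>+k. ennreal (s ^ k) \<partial>binomial_pmf n q)
        * (\<integral>\<^sup>+k. ennreal (s ^ k) \<partial>poiss (q * f j))"
    by (simp only: nn_integral_power_bind_add_pmf[OF s])
  also have "\<dots> = ennreal ((1 - q * (1 - s)) ^ n) * ennreal (exp (- q * f j * (1 - s)))"
    by (simp add: nn_integral_binomial_pmf_power[OF q(2,3) s] nn_integral_poiss_power[OF \<open>0 \<le> q * f j\<close> s])
  finally show ?thesis
    using False by simp
qed

lemma nn_integral_chain_marginal_power:
  assumes q: "q = (1 - p) / p" "0 \<le> q" "q \<le> 1" and f: "\<And>j. 1 \<le> j \<Longrightarrow> 0 \<le> f j"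
    and "0 \<le> s" "s \<le> 1"
  shows "(\<integral>\<^sup>+k. ennreal (s ^ k) \<partial>chain_marginal p f j)
    = ennreal ((1 - q ^ j * (1 - s)) * exp (- (1 - s) * immigrant_mean q f j))"
  using \<open>0 \<le> s\<close> \<open>s \<le> 1\<close>
proof (induction j arbitrary: s)
  case 0
  then show ?case by (simp add: immigrant_mean_def)
next
  case (Suc j)
  define s' where "s' = 1 - q * (1 - s)"
  have s': "0 \<le> s'" "s' \<le> 1"
    using q(2,3) Suc.prems by (auto simp: s'_def mult_le_one)
  define c where "c = (if j = 0 then 1 else exp (- q * f j * (1 - s)))"
  have "0 \<le> c" by (simp add: c_def)
  have "(\<integral>\<^sup>+k. ennreal (s ^ k) \<partial>chain_marginal p f (Suc j))
      = (\<integral>\<^sup>+m. ennreal (s' ^ m) * ennreal c \<partial>chain_marginal p f j)"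
    unfolding chain_marginal_Suc nn_integral_bind_pmf s'_def c_def
    using nn_integral_chain_step_power[OF q \<open>0 \<le> s\<close>, where f = f] f by simp
  also have "\<dots> = ennreal ((1 - q ^ j * (1 - s')) * exp (- (1 - s') * immigrant_mean q f j) * c)"
    using Suc.IH[OF s'] q(2,3) s' \<open>0 \<le> c\<close>
    by (simp add: nn_integral_multc ennreal_mult mult_le_one power_le_one)
  also have "(1 - q ^ j * (1 - s')) * exp (- (1 - s') * immigrant_mean q f j) * c
      = (1 - q ^ Suc j * (1 - s)) * exp (- (1 - s) * immigrant_mean q f (Suc j))"
  proof -
    have "exp (- (1 - s') * immigrant_mean q f j) * c = exp (- (1 - s) * immigrant_mean q f (Suc j))"
    proof (cases "j = 0")
      case False
      then have "- (1 - s') * immigrant_mean q f j - q * f j * (1 - s) = - (1 - s) * immigrant_mean q f (Suc j)"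
        by (simp add: s'_def immigrant_mean_Suc algebra_simps)
      with False show ?thesis
        by (simp add: c_def mult_exp_exp)
    qed (simp add: c_def immigrant_mean_def)
    then show ?thesis
      by (simp add: s'_def mult.assoc)
  qed
  finally show ?case .
qed

lemma nn_integral_zero_power_pmf:
  fixes M :: "nat pmf"
  shows "(\<integral>\<^sup>+k. ennreal (0 ^ k) \<partial>M) = ennreal (pmf M 0)"
proof -
  have "(\<lambda>k::nat. ennreal (0 ^ k)) = indicator {0}"
    by (auto simp: indicator_def)
  then show ?thesis
    by (simp add: emeasure_pmf_single)
qed

lemma pmf_chain_marginal_0:
  assumes "q = (1 - p) / p" "0 \<le> q" "q \<le> 1" and "\<And>j. 1 \<le> j \<Longrightarrow> 0 \<le> f j"
  shows "pmf (chain_marginal p f j) 0 = (1 - q ^ j) * exp (- immigrant_mean q f j)"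
proof -
  have "0 \<le> (1 - q ^ j) * exp (- immigrant_mean q f j)"
    using assms by (simp add: power_le_one)
  then show ?thesis
    using nn_integral_chain_marginal_power[where f = f and s = 0 and j = j, OF assms]
    by (simp add: nn_integral_zero_power_pmf)
qed

lemma pmf_chain_marginal_0_lower_bound:
  assumes q: "q = (1 - p) / p" "0 \<le> q" "q < 1" and f: "\<And>j. 1 \<le> j \<Longrightarrow> 0 \<le> f j"
    and mono: "\<And>i j. 1 \<le> i \<Longrightarrow> i \<le> j \<Longrightarrow> f i \<le> f j" and "1 \<le> j"
  shows "(1 - q) * exp (- (q / (1 - q)) * f j) \<le> pmf (chain_marginal p f (Suc j)) 0"
proof -
  have "1 - q \<le> 1 - q ^ Suc j"
    using q power_decreasing[of 1 "Suc j" q] by simp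
  moreover have "exp (- (q / (1 - q)) * f j) \<le> exp (- immigrant_mean q f (Suc j))"
    using immigrant_mean_le[OF q(2,3) f mono \<open>1 \<le> j\<close>] by simp
  moreover have "pmf (chain_marginal p f (Suc j)) 0 = (1 - q ^ Suc j) * exp (- immigrant_mean q f (Suc j))"
    using q f by (intro pmf_chain_marginal_0) auto
  ultimately show ?thesis
    using q by (simp add: mult_mono)
qed

lemma nn_integral_zero_count:
  "(\<integral>\<^sup>+xs. ennreal (real (zero_count n xs)) \<partial>chain_path p f n)
    = (\<Sum>j\<in>{1..n}. ennreal (pmf (chain_marginal p f j) 0))"
proof -
  have "real (zero_count n xs) = (\<Sum>j\<in>{1..n}. indicator {0} (xs ! j))" for xs
    by (simp add: zero_count_def indicator_def sum.If_cases Int_def)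
  then have "(\<integral>\<^sup>+xs. ennreal (real (zero_count n xs)) \<partial>chain_path p f n)
      = (\<Sum>j\<in>{1..n}. \<integral>\<^sup>+xs. indicator {0} (xs ! j) \<partial>chain_path p f n)"
    by (simp add: nn_integral_sum flip: sum_ennreal ennreal_indicator)
  also have "\<dots> = (\<Sum>j\<in>{1..n}. ennreal (pmf (chain_marginal p f j) 0))"
  proof (intro sum.cong refl)
    fix j assume "j \<in> {1..n}"
    then have "chain_marginal p f j = map_pmf (\<lambda>xs. xs ! j) (chain_path p f n)"
      by (simp add: map_pmf_nth_chain_path)
    then have "(\<integral>\<^sup>+xs. indicator {0} (xs ! j) \<partial>chain_path p f n)
        = (\<integral>\<^sup>+y. indicator {0} y \<partial>chain_marginal p f j)"
      by simp
    also have "\<dots> = ennreal (pmf (chain_marginal p f j) 0)"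
      by (simp add: emeasure_pmf_single)
    finally show "(\<integral>\<^sup>+xs. indicator {0} (xs ! j) \<partial>chain_path p f n)
        = ennreal (pmf (chain_marginal p f j) 0)" .
  qed
  finally show ?thesis .
qed

lemma expected_zeros_eq_suminf:
  "expected_zeros p f = (\<Sum>j. ennreal (pmf (chain_marginal p f (Suc j)) 0))"
  unfolding expected_zeros_def nn_integral_zero_count sum_bounds_lt_plus1[symmetric]
  by (simp add: suminf_eq_SUP)

theorem proposition6:
  fixes p :: real and f :: "nat \<Rightarrow> real"
  assumes "1/2 < p" and "p < 1"
    and "\<And>j. 1 \<le> j \<Longrightarrow> 0 \<le> f j"
    and "\<And>i j. 1 \<le> i \<Longrightarrow> i \<le> j \<Longrightarrow> f i \<le> f j"
    and "\<not> summable (\<lambda>j. exp (- ((1 - p) / (2 * p - 1)) * f (Suc j)))"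
  shows "expected_zeros p f = \<infinity>"
proof (rule ccontr)
  define q where "q = (1 - p) / p"
  have q: "0 \<le> q" "q < 1" and c: "q / (1 - q) = (1 - p) / (2 * p - 1)"
    using assms(1,2) by (auto simp: q_def field_simps)
  assume "expected_zeros p f \<noteq> \<infinity>"
  then have "summable (\<lambda>j. pmf (chain_marginal p f (Suc j)) 0)"
    by (intro summable_suminf_not_top) (simp_all add: expected_zeros_eq_suminf)
  then have "summable (\<lambda>j. pmf (chain_marginal p f (Suc (Suc j))) 0)"
    by (subst summable_Suc_iff)
  moreover have "norm ((1 - q) * exp (- (q / (1 - q)) * f (Suc j)))
      \<le> pmf (chain_marginal p f (Suc (Suc j))) 0" for j
    using pmf_chain_marginal_0_lower_bound[where f = f and j = "Suc j", OF q_def q assms(3,4)] q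
    by simp
  ultimately have "summable (\<lambda>j. (1 - q) * exp (- (q / (1 - q)) * f (Suc j)))"
    by (rule summable_comparison_test')
  with q have "summable (\<lambda>j. exp (- (q / (1 - q)) * f (Suc j)))"
    by simp
  with assms(5) show False
    by (simp add: c)
qed

end
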